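(* Let $B\subset\mathbb{R}^n$, $n\geq2$, be a ball of radius $R\leq R_m$. Let $u\in H^2(B)$ satisfy $(\Delta+k^2)u=\varphi$ for some $\varphi\in C^\alpha(\overline B)$, $0\leq\alpha\leq1$, and $k\geq0$. If $u\in H^2_0(B)$, then \[ \sup_{\partial B}|\varphi|\leq C R^\alpha\|\varphi\|_{C^\alpha(\overline B)} \] for some finite constant $C=C(n,R_m,k)$ depending only on $n,R_m,k$.
   Context: $\|\cdot\|_{C^\alpha}$ denotes the standard Hölder norm; $H^2_0(B)$ is the closure of $C_c^\infty(B)$ in $H^2(B)$. *)

theory Defs
  imports "HOL-Analysis.Analysis"
begin

definition partial :: "'n::finite \<Rightarrow> (real^'n \<Rightarrow> real) \<Rightarrow> real^'n \<Rightarrow> real" where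
  "partial i f x = deriv (\<lambda>t. f (x + t *\<^sub>R axis i 1)) 0"

definition iter_partial :: "'n::finite list \<Rightarrow> (real^'n \<Rightarrow> real) \<Rightarrow> real^'n \<Rightarrow> real" where
  "iter_partial is f = foldr partial is f"

definition smooth_fun :: "(real^'n::finite \<Rightarrow> real) \<Rightarrow> bool" where
  "smooth_fun f \<longleftrightarrow> (\<forall>is. continuous_on UNIV (iter_partial is f) \<and>
      (\<forall>i x. (\<lambda>t. iter_partial is f (x + t *\<^sub>R axis i 1)) differentiable (at 0)))"

definition test_fun :: "(real^'n::finite) set \<Rightarrow> (real^'n \<Rightarrow> real) \<Rightarrow> bool" where
  "test_fun U \<psi> \<longleftrightarrow> smooth_fun \<psi> \<and> compact (closure {x. \<psi> x \<noteq> 0})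
      \<and> closure {x. \<psi> x \<noteq> 0} \<subseteq> U"

definition L2_on :: "(real^'n::finite) set \<Rightarrow> (real^'n \<Rightarrow> real) \<Rightarrow> bool" where
  "L2_on U f \<longleftrightarrow> set_borel_measurable lebesgue U f \<and> set_integrable lebesgue U (\<lambda>x. (f x)\<^sup>2)"

definition weak_deriv :: "(real^'n::finite) set \<Rightarrow> 'n list \<Rightarrow> (real^'n \<Rightarrow> real) \<Rightarrow> (real^'n \<Rightarrow> real) \<Rightarrow> bool" where
  "weak_deriv U is u g \<longleftrightarrow> (\<forall>\<psi>. test_fun U \<psi> \<longrightarrow>
      (LINT x:U|lebesgue. u x * iter_partial is \<psi> x) = (-1) ^ length is * (LINT x:U|lebesgue. g x * \<psi> x))"

definition H2_derivs :: "(real^'n::finite) set \<Rightarrow> (real^'n \<Rightarrow> real) \<Rightarrow> ('n list \<Rightarrow> real^'n \<Rightarrow> real) \<Rightarrow> bool" where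
  "H2_derivs U u G \<longleftrightarrow> G [] = u \<and> (\<forall>is. length is \<le> 2 \<longrightarrow> L2_on U (G is) \<and> weak_deriv U is u (G is))"

definition H2 :: "(real^'n::finite) set \<Rightarrow> (real^'n \<Rightarrow> real) \<Rightarrow> bool" where
  "H2 U u \<longleftrightarrow> (\<exists>G. H2_derivs U u G)"

definition H2_0 :: "(real^'n::finite) set \<Rightarrow> (real^'n \<Rightarrow> real) \<Rightarrow> bool" where
  "H2_0 U u \<longleftrightarrow> (\<exists>G. H2_derivs U u G \<and>
     (\<exists>\<psi>::nat \<Rightarrow> real^'n \<Rightarrow> real. (\<forall>j. test_fun U (\<psi> j)) \<and>
        (\<forall>is. length is \<le> 2 \<longrightarrow>
           (\<lambda>j. LINT x:U|lebesgue. (iter_partial is (\<psi> j) x - G is x)\<^sup>2) \<longlonglongrightarrow> 0)))"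

definition laplacian :: "(real^'n::finite \<Rightarrow> real) \<Rightarrow> real^'n \<Rightarrow> real" where
  "laplacian f x = (\<Sum>i\<in>UNIV. iter_partial [i, i] f x)"

definition helmholtz_weak :: "(real^'n::finite) set \<Rightarrow> real \<Rightarrow> (real^'n \<Rightarrow> real) \<Rightarrow> (real^'n \<Rightarrow> real) \<Rightarrow> bool" where
  "helmholtz_weak U k u \<phi> \<longleftrightarrow> (\<forall>\<psi>. test_fun U \<psi> \<longrightarrow>
      (LINT x:U|lebesgue. u x * (laplacian \<psi> x + k\<^sup>2 * \<psi> x)) = (LINT x:U|lebesgue. \<phi> x * \<psi> x))"

definition holder_quotients :: "real \<Rightarrow> ('a::metric_space) set \<Rightarrow> ('a \<Rightarrow> real) \<Rightarrow> real set" where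
  "holder_quotients \<alpha> S f = {\<bar>f x - f y\<bar> / (dist x y powr \<alpha>) | x y. x \<in> S \<and> y \<in> S \<and> x \<noteq> y}"

definition holder_space :: "real \<Rightarrow> ('a::metric_space) set \<Rightarrow> ('a \<Rightarrow> real) \<Rightarrow> bool" where
  "holder_space \<alpha> S f \<longleftrightarrow> continuous_on S f \<and> bounded (f ` S) \<and> bdd_above (holder_quotients \<alpha> S f)"

definition holder_norm :: "real \<Rightarrow> ('a::metric_space) set \<Rightarrow> ('a \<Rightarrow> real) \<Rightarrow> real" where
  "holder_norm \<alpha> S f = (SUP x\<in>S. \<bar>f x\<bar>) + Sup (holder_quotients \<alpha> S f)"

end

theory Submission
  imports Defs "HOL-Computational_Algebra.Polynomial" "HOL-Real_Asymp.Real_Asymp"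
begin

text \<open>The plane wave \<open>v(x) = cos (k (x\<^sub>l - c\<^sub>l))\<close> solves \<open>(\<Delta> + k\<^sup>2) v = 0\<close>. Testing the equation
  against \<open>v\<close>, truncated by smooth cutoffs exhausting the ball, and using that \<open>u\<close> is an \<open>H\<^sup>2\<close>-limit
  of test functions (for which two integrations by parts move \<open>\<Delta> + k\<^sup>2\<close> onto \<open>v\<close>), gives
  \<open>\<integral>\<^sub>B \<phi> v = 0\<close>. If \<open>k R \<le> 1\<close> then \<open>v \<ge> cos 1 > 0\<close> on \<open>B\<close>, so for \<open>x\<^sub>0 \<in> \<partial>B\<close> the identity
  \<open>\<phi>(x\<^sub>0) \<integral>\<^sub>B v = \<integral>\<^sub>B (\<phi>(x\<^sub>0) - \<phi>) v\<close> yields \<open>\<bar>\<phi>(x\<^sub>0)\<bar> \<le> [\<phi>]\<^sub>\<alpha> (2R)\<^sup>\<alpha>\<close>. If \<open>k R > 1\<close>, then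
  \<open>(k + 2) R\<^sup>\<alpha> \<ge> 1\<close> and the trivial bound by \<open>sup \<bar>\<phi>\<bar>\<close> suffices. Hence \<open>C = k + 2\<close> works.\<close>

section \<open>Smooth functions generated by flat exponentials and cosines\<close>

text \<open>For \<open>t > 0\<close>, \<open>exp_recip_deriv m t = P\<^sub>m(1/t) exp(-1/t)\<close> is the \<open>m\<close>-th derivative of
  \<open>exp(-1/t)\<close>, because \<open>d/dt (P(1/t) exp(-1/t)) = (P - P')(1/t) exp(-1/t) / t\<^sup>2\<close>.\<close>

primrec exp_recip_poly :: "nat \<Rightarrow> real poly" where
  "exp_recip_poly 0 = 1"
| "exp_recip_poly (Suc m) = [:0,0,1:] * (exp_recip_poly m - pderiv (exp_recip_poly m))"

definition exp_recip_deriv :: "nat \<Rightarrow> real \<Rightarrow> real" where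
  "exp_recip_deriv m t = (if t > 0 then poly (exp_recip_poly m) (1/t) * exp (-1/t) else 0)"

lemma tendsto_poly_times_exp_neg_at_top: "((\<lambda>y. poly q y * exp (- y)) \<longlongrightarrow> (0::real)) at_top"
proof -
  have "((\<lambda>y. \<Sum>i\<le>degree q. coeff q i * (y ^ i / exp y)) \<longlongrightarrow> 0) at_top"
    by (intro tendsto_null_sum tendsto_mult_right_zero tendsto_power_div_exp_0)
  then show ?thesis
    by (simp add: poly_altdef exp_minus divide_inverse[symmetric] sum_divide_distrib)
qed

lemma DERIV_exp_recip_deriv_pos:
  assumes "t > 0"
  shows "(exp_recip_deriv m has_real_derivative exp_recip_deriv (Suc m) t) (at t)"
proof (rule has_field_derivative_transform_within_open[where S="{0<..}"])
  let ?P = "exp_recip_poly m"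
  have "((\<lambda>t. poly ?P (1/t) * exp (-1/t)) has_real_derivative
      poly (pderiv ?P) (1/t) * (- 1 / t^2) * exp (-1/t) + poly ?P (1/t) * (exp (-1/t) * (1/t^2))) (at t)"
    using assms
    by (auto intro!: derivative_eq_intros DERIV_chain2[OF poly_DERIV] simp: power2_eq_square)
  then show "((\<lambda>t. poly ?P (1/t) * exp (-1/t)) has_real_derivative exp_recip_deriv (Suc m) t) (at t)"
    using assms by (simp add: exp_recip_deriv_def field_simps power2_eq_square)
qed (use assms in \<open>auto simp: exp_recip_deriv_def\<close>)

lemma DERIV_exp_recip_deriv_0: "(exp_recip_deriv m has_real_derivative 0) (at 0)"
proof -
  have "((\<lambda>y. poly ([:0,1:] * exp_recip_poly m) y * exp (- y)) \<longlongrightarrow> 0) at_top"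
    by (rule tendsto_poly_times_exp_neg_at_top)
  then have "((\<lambda>h. poly ([:0,1:] * exp_recip_poly m) (inverse h) * exp (- inverse h)) \<longlongrightarrow> 0)
      (at_right 0)"
    by (rule filterlim_compose[OF _ filterlim_inverse_at_top_right])
  then have right: "((\<lambda>h. exp_recip_deriv m h / h) \<longlongrightarrow> 0) (at_right 0)"
    by (rule Lim_transform_eventually)
      (auto simp: exp_recip_deriv_def field_simps intro!: eventually_mono[OF eventually_at_right_less])
  have "eventually (\<lambda>h. 0 = exp_recip_deriv m h / h) (at_left 0)"
    by (auto simp: eventually_at_filter exp_recip_deriv_def)
  then have left: "((\<lambda>h. exp_recip_deriv m h / h) \<longlongrightarrow> 0) (at_left 0)"
    by (rule Lim_transform_eventually[OF tendsto_const])
  show ?thesis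
    using left right by (simp add: filterlim_split_at DERIV_def exp_recip_deriv_def)
qed

lemma DERIV_exp_recip_deriv: "(exp_recip_deriv m has_real_derivative exp_recip_deriv (Suc m) t) (at t)"
proof (cases t "0::real" rule: linorder_cases)
  case less
  have "((\<lambda>t. 0) has_real_derivative exp_recip_deriv (Suc m) t) (at t)"
    using less by (simp add: exp_recip_deriv_def)
  then show ?thesis
    by (rule has_field_derivative_transform_within_open[where S="{..<0}"])
      (use less in \<open>auto simp: exp_recip_deriv_def\<close>)
qed (use DERIV_exp_recip_deriv_pos DERIV_exp_recip_deriv_0 exp_recip_deriv_def in auto)

lemma exp_recip_deriv_0_bounds: "0 \<le> exp_recip_deriv 0 t" "exp_recip_deriv 0 t \<le> 1"
  by (auto simp: exp_recip_deriv_def)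

lemma tendsto_exp_recip_deriv_0_at_top: "(exp_recip_deriv 0 \<longlongrightarrow> 1) at_top"
proof -
  have "((\<lambda>t::real. exp (-1/t)) \<longlongrightarrow> 1) at_top"
    by real_asymp
  then show ?thesis
    by (rule Lim_transform_eventually)
      (auto simp: exp_recip_deriv_def eventually_at_top_dense intro!: exI[of _ 0])
qed

definition cos_nth_deriv :: "nat \<Rightarrow> real \<Rightarrow> real" where
  "cos_nth_deriv m t = cos (t + real m * (pi / 2))"

lemma DERIV_cos_nth_deriv: "(cos_nth_deriv m has_real_derivative cos_nth_deriv (Suc m) t) (at t)"
proof -
  have shift: "t + real (Suc m) * (pi / 2) = (t + real m * (pi / 2)) + pi / 2"
    by (simp add: algebra_simps)
  show ?thesis
    unfolding cos_nth_deriv_def shift cos_add by (auto intro!: derivative_eq_intros simp: sin_add)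
qed

text \<open>A syntactic certificate for \<^const>\<open>smooth_fun\<close>: the class is closed under partial
  derivatives.\<close>

inductive_set smooth_gen :: "(real^'n::finite \<Rightarrow> real) set" where
  const: "(\<lambda>x. a) \<in> smooth_gen"
| component: "(\<lambda>x. x $ i) \<in> smooth_gen"
| add: "f \<in> smooth_gen \<Longrightarrow> g \<in> smooth_gen \<Longrightarrow> (\<lambda>x. f x + g x) \<in> smooth_gen"
| mult: "f \<in> smooth_gen \<Longrightarrow> g \<in> smooth_gen \<Longrightarrow> (\<lambda>x. f x * g x) \<in> smooth_gen"
| comp: "(\<And>m t. (F m has_real_derivative F (Suc m) t) (at t)) \<Longrightarrow> f \<in> smooth_gen \<Longrightarrow>
    (\<lambda>x. F m (f x)) \<in> smooth_gen"

lemma smooth_gen_diff: "f \<in> smooth_gen \<Longrightarrow> g \<in> smooth_gen \<Longrightarrow> (\<lambda>x. f x - g x) \<in> smooth_gen"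
  using smooth_gen.add[OF _ smooth_gen.mult[OF smooth_gen.const, of g "-1"]] by simp

lemma smooth_gen_sum:
  "finite I \<Longrightarrow> (\<And>i. i \<in> I \<Longrightarrow> f i \<in> smooth_gen) \<Longrightarrow> (\<lambda>x. \<Sum>i\<in>I. f i x) \<in> smooth_gen"
  by (induction I rule: finite_induct) (auto intro: smooth_gen.const smooth_gen.add)

lemma smooth_gen_continuous: "f \<in> smooth_gen \<Longrightarrow> continuous_on UNIV f"
proof (induction rule: smooth_gen.induct)
  case (comp F f m)
  then have "continuous_on UNIV (F m)"
    by (meson DERIV_isCont continuous_at_imp_continuous_on)
  then have "continuous_on (range f) (F m)"
    by (rule continuous_on_subset) simp
  with comp.IH show ?case
    using continuous_on_compose[of UNIV f "F m"] by (simp add: o_def)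
qed (auto intro!: continuous_intros)

lemma axis_component: "(x + t *\<^sub>R axis i 1) $ j = x $ j + t * (if j = i then 1 else 0)"
  by (simp add: axis_def)

lemma smooth_gen_line_DERIV:
  assumes "f \<in> smooth_gen"
  shows "\<exists>g\<in>smooth_gen. \<forall>x. ((\<lambda>t. f (x + t *\<^sub>R axis i 1)) has_real_derivative g x) (at 0)"
  using assms
proof induction
  case (const a)
  then show ?case by (auto intro!: bexI[of _ "\<lambda>x. 0"] smooth_gen.const)
next
  case (component j)
  show ?case
    by (rule bexI[of _ "\<lambda>x. if j = i then 1 else 0"], unfold axis_component)
      (auto intro!: derivative_eq_intros smooth_gen.const)
next
  case (add f g)
  then obtain f' g' where "f' \<in> smooth_gen" "g' \<in> smooth_gen"
    and "\<And>x. ((\<lambda>t. f (x + t *\<^sub>R axis i 1)) has_real_derivative f' x) (at 0)"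
    and "\<And>x. ((\<lambda>t. g (x + t *\<^sub>R axis i 1)) has_real_derivative g' x) (at 0)"
    by blast
  then show ?case
    by (intro bexI[of _ "\<lambda>x. f' x + g' x"] allI smooth_gen.add) (auto intro!: derivative_eq_intros)
next
  case (mult f g)
  then obtain f' g' where "f' \<in> smooth_gen" "g' \<in> smooth_gen"
    and "\<And>x. ((\<lambda>t. f (x + t *\<^sub>R axis i 1)) has_real_derivative f' x) (at 0)"
    and "\<And>x. ((\<lambda>t. g (x + t *\<^sub>R axis i 1)) has_real_derivative g' x) (at 0)"
    by blast
  then show ?case
    by (intro bexI[of _ "\<lambda>x. f' x * g x + f x * g' x"] allI)
      (auto intro!: derivative_eq_intros smooth_gen.add smooth_gen.mult mult.hyps)
next
  case (comp F f m)
  then obtain f' where f': "f' \<in> smooth_gen"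
    and df: "\<And>x. ((\<lambda>t. f (x + t *\<^sub>R axis i 1)) has_real_derivative f' x) (at 0)"
    by blast
  have "((\<lambda>t. F m (f (x + t *\<^sub>R axis i 1))) has_real_derivative F (Suc m) (f x) * f' x) (at 0)" for x
    using DERIV_chain2[OF comp.hyps(1) df[of x]] by simp
  moreover have "(\<lambda>x. F (Suc m) (f x) * f' x) \<in> smooth_gen"
    by (intro smooth_gen.mult smooth_gen.comp[of F, OF comp.hyps(1)] comp.hyps(2) f')
  ultimately show ?case by (intro bexI[of _ "\<lambda>x. F (Suc m) (f x) * f' x"]) auto
qed

lemma partial_in_smooth_gen:
  assumes "f \<in> smooth_gen"
  shows "partial i f \<in> smooth_gen"
proof -
  obtain g where "g \<in> smooth_gen"
    and "\<And>x. ((\<lambda>t. f (x + t *\<^sub>R axis i 1)) has_real_derivative g x) (at 0)"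
    using smooth_gen_line_DERIV[OF assms] by blast
  moreover from this(2) have "partial i f = g"
    by (auto simp: partial_def fun_eq_iff intro!: DERIV_imp_deriv)
  ultimately show ?thesis by simp
qed

lemma iter_partial_in_smooth_gen: "f \<in> smooth_gen \<Longrightarrow> iter_partial is f \<in> smooth_gen"
  by (induction "is") (auto simp: iter_partial_def intro: partial_in_smooth_gen)

lemma smooth_gen_imp_smooth_fun: "f \<in> smooth_gen \<Longrightarrow> smooth_fun f"
  unfolding smooth_fun_def real_differentiable_def
  by (metis iter_partial_in_smooth_gen smooth_gen_continuous smooth_gen_line_DERIV)

section \<open>Integration by parts along a coordinate direction\<close>

lemma integrable_lborel_compact_support:
  fixes f :: "'a::euclidean_space \<Rightarrow> real"
  assumes "continuous_on UNIV f" "compact K" "\<And>x. x \<notin> K \<Longrightarrow> f x = 0"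
  shows "integrable lborel f"
proof -
  have "integrable lborel (\<lambda>x. indicator K x *\<^sub>R f x)"
    using assms(2) continuous_on_subset[OF assms(1) subset_UNIV] by (rule borel_integrable_compact)
  also have "(\<lambda>x. indicator K x *\<^sub>R f x) = f"
    using assms(3) by (auto simp: fun_eq_iff split: split_indicator)
  finally show ?thesis .
qed

lemma
  fixes h :: "'a::euclidean_space \<Rightarrow> real"
  assumes "h \<in> borel_measurable borel"
  shows integral_lborel_translate: "integral\<^sup>L lborel (\<lambda>x. h (x + a)) = integral\<^sup>L lborel h"
    and integrable_lborel_translate: "integrable lborel (\<lambda>x. h (x + a)) = integrable lborel h"
proof -
  have "integral\<^sup>L (distr lborel borel ((+) a)) h = integral\<^sup>L lborel (\<lambda>x. h (a + x))"
    by (rule integral_distr) (use assms in auto)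
  then show "integral\<^sup>L lborel (\<lambda>x. h (x + a)) = integral\<^sup>L lborel h"
    by (simp add: lborel_distr_plus add.commute)
  have "integrable (distr lborel borel ((+) a)) h = integrable lborel (\<lambda>x. h (a + x))"
    by (rule integrable_distr_eq) (use assms in auto)
  then show "integrable lborel (\<lambda>x. h (x + a)) = integrable lborel h"
    by (simp add: lborel_distr_plus add.commute)
qed

lemma line_DERIV_eq_0_outside:
  fixes f :: "'a::real_normed_vector \<Rightarrow> real"
  assumes "closed K" and fK: "\<And>y. y \<notin> K \<Longrightarrow> f y = 0"
    and d: "((\<lambda>t. f (x + t *\<^sub>R e)) has_real_derivative D) (at 0)" and "x \<notin> K"
  shows "D = 0"
proof -
  have "open (- K)"
    using \<open>closed K\<close> by (simp add: open_Compl)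
  then obtain \<epsilon> where \<epsilon>: "\<epsilon> > 0" "ball x \<epsilon> \<subseteq> - K"
    using \<open>x \<notin> K\<close> by (meson ComplI open_contains_ball)
  define S where "S = (\<lambda>t::real. x + t *\<^sub>R e) -` ball x \<epsilon>"
  have "open S"
    unfolding S_def by (rule open_vimage) (auto intro!: continuous_intros)
  then have "((\<lambda>t. f (x + t *\<^sub>R e)) has_real_derivative 0) (at 0)"
    by (rule has_field_derivative_transform_within_open[OF DERIV_const[of 0]])
      (use \<epsilon> fK in \<open>auto simp: S_def\<close>)
  then show ?thesis
    using d DERIV_unique by blast
qed

lemma line_MVT:
  fixes h h' :: "'a::real_normed_vector \<Rightarrow> real"
  assumes d: "\<And>x. ((\<lambda>t. h (x + t *\<^sub>R e)) has_real_derivative h' x) (at 0)" and "0 < a"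
  obtains z where "0 < z" "z < a" "h (x + a *\<^sub>R e) - h x = a * h' (x + z *\<^sub>R e)"
proof -
  have "\<exists>z. 0 < z \<and> z < a \<and> h (x + a *\<^sub>R e) - h (x + 0 *\<^sub>R e) = (a - 0) * h' (x + z *\<^sub>R e)"
  proof (rule MVT2[OF \<open>0 < a\<close>])
    fix t
    have "((\<lambda>s. h (x + (s + t) *\<^sub>R e)) has_real_derivative h' (x + t *\<^sub>R e)) (at 0)"
      using d[of "x + t *\<^sub>R e"] by (simp add: scaleR_add_left ac_simps)
    then show "((\<lambda>t. h (x + t *\<^sub>R e)) has_real_derivative h' (x + t *\<^sub>R e)) (at t)"
      using DERIV_shift[of "\<lambda>t. h (x + t *\<^sub>R e)" _ 0 t] by simp
  qed
  then show ?thesis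
    using that by auto
qed

lemma tendsto_line_difference_quotient:
  fixes h :: "'a::real_normed_vector \<Rightarrow> real"
  assumes "((\<lambda>t. h (x + t *\<^sub>R e)) has_real_derivative D) (at 0)"
  shows "(\<lambda>n. (h (x + inverse (real (Suc n)) *\<^sub>R e) - h x) / inverse (real (Suc n))) \<longlonglongrightarrow> D"
proof -
  have "((\<lambda>t. (h (x + t *\<^sub>R e) - h x) / t) \<longlongrightarrow> D) (at 0)"
    using assms by (simp add: DERIV_def)
  moreover have "filterlim (\<lambda>n. inverse (real (Suc n))) (at 0) sequentially"
    using LIMSEQ_inverse_real_of_nat by (auto simp: filterlim_at)
  ultimately show ?thesis
    by (rule filterlim_compose)
qed

lemma abs_line_difference_quotient_le:
  fixes h h' :: "'a::real_normed_vector \<Rightarrow> real"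
  assumes d: "\<And>x. ((\<lambda>t. h (x + t *\<^sub>R e)) has_real_derivative h' x) (at 0)" and e: "norm e = 1"
    and h: "\<And>x. r < norm x \<Longrightarrow> h x = 0" and M: "\<And>y. norm y \<le> r + 2 \<Longrightarrow> \<bar>h' y\<bar> \<le> M"
    and a: "0 < a" "a \<le> 1"
  shows "\<bar>(h (x + a *\<^sub>R e) - h x) / a\<bar> \<le> M * indicator (cball 0 (r + 1)) x"
proof (cases "x \<in> cball 0 (r + 1)")
  case False
  then have "r < norm (x + a *\<^sub>R e)" "r < norm x"
    using a e norm_triangle_ineq2[of x "- a *\<^sub>R e"] by auto
  then show ?thesis
    using False h by simp
next
  case True
  obtain z where z: "0 < z" "z < a" "h (x + a *\<^sub>R e) - h x = a * h' (x + z *\<^sub>R e)"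
    using line_MVT[OF d a(1)] by metis
  have "norm (x + z *\<^sub>R e) \<le> r + 2"
    using True z a e norm_triangle_ineq[of x "z *\<^sub>R e"] by simp
  then show ?thesis
    using True M z(3) a by simp
qed

lemma integral_line_difference_quotient_eq_0:
  fixes h :: "'a::euclidean_space \<Rightarrow> real"
  assumes "h \<in> borel_measurable borel" "integrable lborel h"
  shows "integral\<^sup>L lborel (\<lambda>x. (h (x + a *\<^sub>R e) - h x) / a) = 0"
proof -
  have "integrable lborel (\<lambda>x. h (x + a *\<^sub>R e))"
    using integrable_lborel_translate[OF assms(1)] assms(2) by simp
  then show ?thesis
    using assms(2) integral_lborel_translate[OF assms(1)] by simp
qed

text \<open>The difference quotients \<open>(h(x + e/n) - h x) n\<close> integrate to \<open>0\<close> by translation invariance,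
  and converge dominatedly to \<open>h'\<close> by the mean value theorem.\<close>

lemma integral_line_deriv_eq_0:
  fixes h h' :: "'a::euclidean_space \<Rightarrow> real"
  assumes ch: "continuous_on UNIV h" and ch': "continuous_on UNIV h'"
    and K: "compact K" and hK: "\<And>x. x \<notin> K \<Longrightarrow> h x = 0" and e: "norm e = 1"
    and d: "\<And>x. ((\<lambda>t. h (x + t *\<^sub>R e)) has_real_derivative h' x) (at 0)"
  shows "integral\<^sup>L lborel h' = 0"
proof -
  obtain r where "\<And>x. x \<in> K \<Longrightarrow> norm x \<le> r"
    using compact_imp_bounded[OF K] unfolding bounded_iff by blast
  then have h_out: "\<And>x. r < norm x \<Longrightarrow> h x = 0"
    using hK by force
  have "bounded (h' ` cball 0 (r + 2))"
    by (intro compact_imp_bounded compact_continuous_image continuous_on_subset[OF ch']) auto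
  then obtain M where "\<forall>z \<in> h' ` cball 0 (r + 2). norm z \<le> M"
    unfolding bounded_iff by blast
  then have M: "\<And>y. norm y \<le> r + 2 \<Longrightarrow> \<bar>h' y\<bar> \<le> M"
    by simp
  define s where "s n x = (h (x + inverse (real (Suc n)) *\<^sub>R e) - h x) / inverse (real (Suc n))" for n x
  have hb: "h \<in> borel_measurable borel"
    using ch by (rule borel_measurable_continuous_onI)
  have int0: "integral\<^sup>L lborel (s n) = 0" for n
    unfolding s_def using integrable_lborel_compact_support[OF ch K hK]
    by (rule integral_line_difference_quotient_eq_0[OF hb])
  have "(\<lambda>n. integral\<^sup>L lborel (s n)) \<longlonglongrightarrow> integral\<^sup>L lborel h'"
  proof (rule integral_dominated_convergence[where w="\<lambda>x. M * indicator (cball 0 (r+1)) x"])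
    show "h' \<in> borel_measurable lborel"
      using ch' by (simp add: borel_measurable_continuous_onI)
    show "s n \<in> borel_measurable lborel" for n
      unfolding s_def using hb by measurable
    show "integrable lborel (\<lambda>x. M * indicator (cball 0 (r+1)) x)"
      by (intro integrable_mult_right integrable_real_indicator emeasure_bounded_finite) auto
    show "AE x in lborel. norm (s n x) \<le> M * indicator (cball 0 (r+1)) x" for n
    proof (intro AE_I2)
      fix x
      have "0 < inverse (real (Suc n))" "inverse (real (Suc n)) \<le> 1"
        by (auto simp: field_simps)
      then show "norm (s n x) \<le> M * indicator (cball 0 (r+1)) x"
        unfolding s_def real_norm_def by (intro abs_line_difference_quotient_le[OF d e h_out M])
    qed
  qed (use tendsto_line_difference_quotient[OF d] in \<open>simp add: s_def\<close>)
  then show ?thesis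
    using int0 by (simp add: LIMSEQ_const_iff)
qed

lemma integral_by_parts_line:
  fixes f g f' g' :: "'a::euclidean_space \<Rightarrow> real"
  assumes cf: "continuous_on UNIV f" and cg: "continuous_on UNIV g"
    and cf': "continuous_on UNIV f'" and cg': "continuous_on UNIV g'"
    and K: "compact K" and fK: "\<And>x. x \<notin> K \<Longrightarrow> f x = 0" and e: "norm e = 1"
    and df: "\<And>x. ((\<lambda>t. f (x + t *\<^sub>R e)) has_real_derivative f' x) (at 0)"
    and dg: "\<And>x. ((\<lambda>t. g (x + t *\<^sub>R e)) has_real_derivative g' x) (at 0)"
  shows "integral\<^sup>L lborel (\<lambda>x. f' x * g x) = - integral\<^sup>L lborel (\<lambda>x. f x * g' x)"
proof -
  have f'K: "f' x = 0" if "x \<notin> K" for x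
    using line_DERIV_eq_0_outside[OF compact_imp_closed[OF K] fK df that] .
  have "integrable lborel (\<lambda>x. f' x * g x)" "integrable lborel (\<lambda>x. f x * g' x)"
    using cf cg cf' cg' fK f'K
    by (auto intro!: integrable_lborel_compact_support[OF _ K] continuous_intros)
  moreover have "integral\<^sup>L lborel (\<lambda>x. f' x * g x + f x * g' x) = 0"
  proof (rule integral_line_deriv_eq_0[OF _ _ K _ e])
    fix x
    show "((\<lambda>t. f (x + t *\<^sub>R e) * g (x + t *\<^sub>R e)) has_real_derivative f' x * g x + f x * g' x) (at 0)"
      using DERIV_mult[OF df[of x] dg[of x]] by (simp add: mult.commute)
  qed (use cf cg cf' cg' fK in \<open>auto intro!: continuous_intros\<close>)
  ultimately show ?thesis
    by simp
qed

section \<open>Test functions and the plane wave\<close>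

lemma test_funE:
  assumes "test_fun U \<psi>"
  obtains K where "compact K" "K \<subseteq> U" "\<And>x. x \<notin> K \<Longrightarrow> \<psi> x = 0" "smooth_fun \<psi>"
proof (rule that)
  show "\<psi> x = 0" if "x \<notin> closure {x. \<psi> x \<noteq> 0}" for x
    using that closure_subset[of "{x. \<psi> x \<noteq> 0}"] by blast
qed (use assms in \<open>simp_all add: test_fun_def\<close>)

lemma iter_partial_Nil [simp]: "iter_partial [] f = f"
  by (simp add: iter_partial_def)

lemma continuous_on_iter_partial: "smooth_fun \<psi> \<Longrightarrow> continuous_on UNIV (iter_partial is \<psi>)"
  by (simp add: smooth_fun_def)

lemma smooth_fun_line_DERIV:
  assumes "smooth_fun \<psi>"
  shows "((\<lambda>t. iter_partial is \<psi> (x + t *\<^sub>R axis i 1)) has_real_derivative iter_partial (i # is) \<psi> x)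
    (at 0)"
proof -
  have "(\<lambda>t. iter_partial is \<psi> (x + t *\<^sub>R axis i 1)) differentiable (at 0)"
    using assms by (auto simp: smooth_fun_def)
  then show ?thesis
    by (simp add: DERIV_deriv_iff_real_differentiable iter_partial_def partial_def)
qed

lemma iter_partial_eq_0_outside:
  assumes "smooth_fun \<psi>" "closed K" "\<And>y. y \<notin> K \<Longrightarrow> \<psi> y = 0" "x \<notin> K"
  shows "iter_partial is \<psi> x = 0"
  using assms(4)
proof (induction "is" arbitrary: x)
  case Nil
  then show ?case
    using assms(3) by (simp add: iter_partial_def)
next
  case (Cons i "is")
  show ?case
    by (rule line_DERIV_eq_0_outside[OF assms(2) Cons.IH smooth_fun_line_DERIV[OF assms(1)] Cons.prems])
qed

definition cos_wave :: "real \<Rightarrow> 'n::finite \<Rightarrow> real^'n \<Rightarrow> real^'n \<Rightarrow> real" where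
  "cos_wave k l c x = cos (k * (x $ l - c $ l))"

lemma cos_wave_in_smooth_gen: "cos_wave k l c \<in> smooth_gen"
proof -
  have "(\<lambda>x. cos_nth_deriv 0 (k * (x $ l - c $ l))) \<in> smooth_gen"
    by (intro smooth_gen.comp[of cos_nth_deriv, OF DERIV_cos_nth_deriv] smooth_gen.mult smooth_gen_diff
        smooth_gen.const smooth_gen.component)
  then show ?thesis
    by (simp add: cos_nth_deriv_def cos_wave_def[abs_def])
qed

lemma continuous_on_cos_wave: "continuous_on UNIV (cos_wave k l c)"
  unfolding cos_wave_def by (intro continuous_intros)

lemma abs_cos_wave_le_1: "\<bar>cos_wave k l c x\<bar> \<le> 1"
  by (simp add: cos_wave_def)

lemma integral_second_partial_cos_wave:
  assumes "test_fun U \<psi>"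
  shows "integral\<^sup>L lborel (\<lambda>x. iter_partial [i,i] \<psi> x * cos_wave k l c x)
    = (if i = l then - k\<^sup>2 * integral\<^sup>L lborel (\<lambda>x. \<psi> x * cos_wave k l c x) else 0)"
proof -
  obtain K where K: "compact K" "K \<subseteq> U" and \<psi>K: "\<And>x. x \<notin> K \<Longrightarrow> \<psi> x = 0"
    and sm: "smooth_fun \<psi>"
    using test_funE[OF assms] by blast
  note Z = iter_partial_eq_0_outside[OF sm compact_imp_closed[OF K(1)] \<psi>K]
  note C = continuous_on_iter_partial[OF sm]
  define v' where "v' x = (if i = l then - k * sin (k * (x $ l - c $ l)) else 0)" for x :: "real^'a"
  define v'' where "v'' x = (if i = l then - k\<^sup>2 * cos_wave k l c x else 0)" for x :: "real^'a"
  have cv': "continuous_on UNIV v'"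
    unfolding v'_def by (cases "i = l") (auto intro!: continuous_intros)
  have cv'': "continuous_on UNIV v''"
    unfolding v''_def cos_wave_def by (cases "i = l") (auto intro!: continuous_intros)
  have dv: "((\<lambda>t. cos_wave k l c (x + t *\<^sub>R axis i 1)) has_real_derivative v' x) (at 0)" for x
    unfolding cos_wave_def v'_def axis_component by (auto intro!: derivative_eq_intros)
  have dv': "((\<lambda>t. v' (x + t *\<^sub>R axis i 1)) has_real_derivative v'' x) (at 0)" for x
    unfolding cos_wave_def v'_def v''_def axis_component
    by (auto intro!: derivative_eq_intros simp: power2_eq_square)
  have "integral\<^sup>L lborel (\<lambda>x. iter_partial [i,i] \<psi> x * cos_wave k l c x)
      = - integral\<^sup>L lborel (\<lambda>x. iter_partial [i] \<psi> x * v' x)"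
    by (rule integral_by_parts_line[OF C continuous_on_cos_wave C cv' K(1) Z norm_axis_1
          smooth_fun_line_DERIV[OF sm] dv])
  also have "integral\<^sup>L lborel (\<lambda>x. iter_partial [i] \<psi> x * v' x)
      = - integral\<^sup>L lborel (\<lambda>x. iter_partial [] \<psi> x * v'' x)"
    by (rule integral_by_parts_line[OF C cv' C cv'' K(1) Z norm_axis_1 smooth_fun_line_DERIV[OF sm] dv'])
  also have "(\<lambda>x. iter_partial [] \<psi> x * v'' x)
      = (\<lambda>x. (if i = l then - k\<^sup>2 else 0) * (\<psi> x * cos_wave k l c x))"
    by (auto simp: v''_def)
  finally show ?thesis
    by simp
qed

lemma integral_helmholtz_cos_wave_eq_0:
  assumes "test_fun U \<psi>"
  shows "integral\<^sup>L lborel (\<lambda>x. (laplacian \<psi> x + k\<^sup>2 * \<psi> x) * cos_wave k l c x) = 0"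
proof -
  obtain K where K: "compact K" "K \<subseteq> U" and \<psi>K: "\<And>x. x \<notin> K \<Longrightarrow> \<psi> x = 0"
    and sm: "smooth_fun \<psi>"
    using test_funE[OF assms] by blast
  have int: "integrable lborel (\<lambda>x. iter_partial is \<psi> x * cos_wave k l c x)" for "is"
    using continuous_on_iter_partial[OF sm] continuous_on_cos_wave
      iter_partial_eq_0_outside[OF sm compact_imp_closed[OF K(1)] \<psi>K]
    by (intro integrable_lborel_compact_support[OF _ K(1)]) (auto intro!: continuous_intros)
  moreover have "(laplacian \<psi> x + k\<^sup>2 * \<psi> x) * cos_wave k l c x
      = (\<Sum>i\<in>UNIV. iter_partial [i,i] \<psi> x * cos_wave k l c x)
        + k\<^sup>2 * (iter_partial [] \<psi> x * cos_wave k l c x)" for x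
    by (simp add: laplacian_def iter_partial_def sum_distrib_right distrib_right)
  ultimately have "integral\<^sup>L lborel (\<lambda>x. (laplacian \<psi> x + k\<^sup>2 * \<psi> x) * cos_wave k l c x)
      = (\<Sum>i\<in>UNIV. integral\<^sup>L lborel (\<lambda>x. iter_partial [i,i] \<psi> x * cos_wave k l c x))
        + k\<^sup>2 * integral\<^sup>L lborel (\<lambda>x. iter_partial [] \<psi> x * cos_wave k l c x)"
    using int[of "[]"] by simp
  also have "\<dots> = 0"
    by (simp add: integral_second_partial_cos_wave[OF assms])
  finally show ?thesis .
qed

lemma set_integrable_continuous_on_closure:
  fixes g :: "'a::euclidean_space \<Rightarrow> real"
  assumes "bounded U" "open U" "continuous_on (closure U) g"
  shows "set_integrable lebesgue U g"
proof -
  have int: "integrable lborel (\<lambda>x. indicator (closure U) x *\<^sub>R g x)"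
    using assms(1,3) by (intro borel_integrable_compact) (simp_all add: compact_closure)
  then have "set_integrable lebesgue (closure U) g"
    unfolding set_integrable_def using integrable_completion[OF borel_measurable_integrable[OF int]]
    by simp
  then show ?thesis
    by (rule set_integrable_subset) (use assms(2) closure_subset in auto)
qed

lemma set_borel_measurable_mult:
  fixes f g :: "'a \<Rightarrow> real"
  assumes "set_borel_measurable M A f" "set_borel_measurable M A g"
  shows "set_borel_measurable M A (\<lambda>x. f x * g x)"
proof -
  have "(\<lambda>x. (indicator A x * f x) * (indicator A x * g x)) \<in> borel_measurable M"
    using assms unfolding set_borel_measurable_def by simp
  also have "(\<lambda>x. (indicator A x * f x) * (indicator A x * g x)) = (\<lambda>x. indicator A x *\<^sub>R (f x * g x))"
    by (auto simp: fun_eq_iff split: split_indicator)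
  finally show ?thesis
    unfolding set_borel_measurable_def .
qed

lemma continuous_on_closure_bounded_abs:
  fixes h :: "'a::euclidean_space \<Rightarrow> real"
  assumes "bounded U" "continuous_on (closure U) h"
  obtains M where "M \<ge> 0" "\<And>x. x \<in> U \<Longrightarrow> \<bar>h x\<bar> \<le> M"
proof -
  have "bounded (h ` closure U)"
    using assms by (intro compact_imp_bounded compact_continuous_image) (simp_all add: compact_closure)
  then obtain M where "M > 0" "\<And>x. x \<in> closure U \<Longrightarrow> \<bar>h x\<bar> \<le> M"
    unfolding bounded_pos by auto
  then show ?thesis
    using that[of M] closure_subset by auto
qed

lemma set_integrable_L2_on_mult:
  fixes f h :: "real^'n::finite \<Rightarrow> real"
  assumes U: "bounded U" "open U" and f: "L2_on U f" and h: "continuous_on (closure U) h"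
  shows "set_integrable lebesgue U (\<lambda>x. f x * h x)"
proof -
  obtain M where M: "M \<ge> 0" "\<And>x. x \<in> U \<Longrightarrow> \<bar>h x\<bar> \<le> M"
    using continuous_on_closure_bounded_abs[OF U(1) h] by blast
  have "set_integrable lebesgue U (\<lambda>x. 1 :: real)"
    using set_integrable_continuous_on_closure[OF U] by simp
  moreover have "set_integrable lebesgue U (\<lambda>x. (f x)\<^sup>2)"
    using f by (simp add: L2_on_def)
  ultimately have "set_integrable lebesgue U (\<lambda>x. M * (1 + (f x)\<^sup>2))"
    by (intro set_integrable_mult_right set_integral_add(1))
  moreover have "set_borel_measurable lebesgue U (\<lambda>x. f x * h x)"
    using f set_integrable_continuous_on_closure[OF U h]
    by (intro set_borel_measurable_mult) (auto simp: L2_on_def set_integrable_def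
        set_borel_measurable_def intro: borel_measurable_integrable)
  moreover have "AE x in lebesgue. x \<in> U \<longrightarrow> norm (f x * h x) \<le> norm (M * (1 + (f x)\<^sup>2))"
  proof (intro AE_I2 impI)
    fix x assume "x \<in> U"
    have "\<bar>f x\<bar> \<le> 1 + (f x)\<^sup>2"
    proof (cases "\<bar>f x\<bar> \<le> 1")
      case False
      then have "\<bar>f x\<bar> * 1 \<le> \<bar>f x\<bar> * \<bar>f x\<bar>"
        by (intro mult_left_mono) auto
      then show ?thesis
        by (simp add: power2_eq_square)
    qed (use zero_le_power2[of "f x"] in linarith)
    then have "\<bar>f x\<bar> * \<bar>h x\<bar> \<le> (1 + (f x)\<^sup>2) * M"
      using M \<open>x \<in> U\<close> by (intro mult_mono) auto
    then show "norm (f x * h x) \<le> norm (M * (1 + (f x)\<^sup>2))"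
      using M by (simp add: abs_mult mult.commute)
  qed
  ultimately show ?thesis
    by (rule set_integrable_bound)
qed

lemma continuous_on_imp_L2_on:
  fixes g :: "real^'n::finite \<Rightarrow> real"
  assumes U: "bounded U" "open U" and g: "continuous_on (closure U) g"
  shows "L2_on U g"
proof -
  have "set_integrable lebesgue U g" "set_integrable lebesgue U (\<lambda>x. (g x)\<^sup>2)"
    using g by (auto intro!: set_integrable_continuous_on_closure[OF U] continuous_intros)
  then show ?thesis
    unfolding L2_on_def set_integrable_def set_borel_measurable_def
    by (auto intro: borel_measurable_integrable)
qed

lemma L2_on_diff:
  fixes f g :: "real^'n::finite \<Rightarrow> real"
  assumes f: "L2_on U f" and g: "L2_on U g"
  shows "L2_on U (\<lambda>x. f x - g x)"
proof -
  have m: "set_borel_measurable lebesgue U (\<lambda>x. f x - g x)"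
    using f g unfolding L2_on_def set_borel_measurable_def
    by (auto simp: right_diff_distrib intro!: borel_measurable_diff)
  have "set_integrable lebesgue U (\<lambda>x. (f x - g x)\<^sup>2)"
  proof (rule set_integrable_bound)
    show "set_integrable lebesgue U (\<lambda>x. 2 * (f x)\<^sup>2 + 2 * (g x)\<^sup>2)"
      using f g unfolding L2_on_def by (intro set_integral_add(1) set_integrable_mult_right) auto
    show "set_borel_measurable lebesgue U (\<lambda>x. (f x - g x)\<^sup>2)"
      unfolding power2_eq_square by (rule set_borel_measurable_mult[OF m m])
    show "AE x in lebesgue. x \<in> U \<longrightarrow>
        norm ((f x - g x)\<^sup>2) \<le> norm (2 * (f x)\<^sup>2 + 2 * (g x)\<^sup>2)"
    proof (intro AE_I2 impI)
      fix x
      have "(f x - g x)\<^sup>2 \<le> 2 * (f x)\<^sup>2 + 2 * (g x)\<^sup>2"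
        using zero_le_power2[of "f x + g x"] by (simp add: power2_eq_square algebra_simps)
      then show "norm ((f x - g x)\<^sup>2) \<le> norm (2 * (f x)\<^sup>2 + 2 * (g x)\<^sup>2)"
        by simp
    qed
  qed
  with m show ?thesis
    by (simp add: L2_on_def)
qed

lemma set_integral_sum:
  fixes f :: "'i \<Rightarrow> 'a \<Rightarrow> real"
  assumes "\<And>i. i \<in> I \<Longrightarrow> set_integrable M A (f i)"
  shows "set_integrable M A (\<lambda>x. \<Sum>i\<in>I. f i x)"
    and "(LINT x:A|M. \<Sum>i\<in>I. f i x) = (\<Sum>i\<in>I. LINT x:A|M. f i x)"
  using assms unfolding set_integrable_def set_lebesgue_integral_def
  by (simp_all add: sum_distrib_left)

text \<open>The pointwise bound \<open>\<bar>g h\<bar> \<le> d/2 + g\<^sup>2/(2d)\<close> replaces the Cauchy-Schwarz inequality.\<close>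

lemma abs_set_integral_mult_le:
  fixes g h :: "'a \<Rightarrow> real"
  assumes B: "B \<in> sets M" "emeasure M B < \<infinity>"
    and g: "set_borel_measurable M B g" "set_integrable M B (\<lambda>x. (g x)\<^sup>2)"
    and h: "h \<in> borel_measurable M" "\<And>x. \<bar>h x\<bar> \<le> 1" and d: "d > 0"
  shows "\<bar>LINT x:B|M. g x * h x\<bar> \<le> d / 2 * measure M B + (LINT x:B|M. (g x)\<^sup>2) / (2 * d)"
proof -
  have bound: "\<bar>g x * h x\<bar> \<le> d / 2 + (g x)\<^sup>2 / (2 * d)" for x
  proof -
    have "0 \<le> (\<bar>g x\<bar> - d)\<^sup>2"
      by simp
    then have "2 * d * \<bar>g x\<bar> \<le> d\<^sup>2 + (g x)\<^sup>2"
      by (simp add: power2_eq_square algebra_simps)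
    then have "\<bar>g x\<bar> \<le> d / 2 + (g x)\<^sup>2 / (2 * d)"
      using d by (simp add: field_simps power2_eq_square)
    moreover have "\<bar>g x * h x\<bar> \<le> \<bar>g x\<bar>"
      using h(2)[of x] by (simp add: abs_mult mult_left_le)
    ultimately show ?thesis
      by linarith
  qed
  have const: "set_integrable M B (\<lambda>x. d / 2)"
    using B by (simp add: set_integrable_def)
  have quot: "set_integrable M B (\<lambda>x. (g x)\<^sup>2 / (2 * d))"
    using g(2) by (rule set_integrable_divide)
  have ib: "set_integrable M B (\<lambda>x. d / 2 + (g x)\<^sup>2 / (2 * d))"
    by (rule set_integral_add(1)[OF const quot])
  have "set_borel_measurable M B h"
    unfolding set_borel_measurable_def using h(1) B(1) by measurable
  then have igh: "set_integrable M B (\<lambda>x. g x * h x)"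
    using bound d by (intro set_integrable_bound[OF ib set_borel_measurable_mult[OF g(1)]] AE_I2)
      (auto intro: order_trans[OF _ abs_ge_self])
  have "\<bar>LINT x:B|M. g x * h x\<bar> \<le> (LINT x:B|M. \<bar>g x * h x\<bar>)"
    using set_integral_norm_bound[OF igh] by simp
  also have "\<dots> \<le> (LINT x:B|M. d / 2 + (g x)\<^sup>2 / (2 * d))"
    using set_integrable_abs[OF igh] ib bound by (rule set_integral_mono)
  also have "\<dots> = d / 2 * measure M B + (LINT x:B|M. (g x)\<^sup>2) / (2 * d)"
    using B set_integral_const[of B M "d / 2"] by (simp add: set_integral_add(2)[OF const quot])
  finally show ?thesis .
qed

lemma set_integral_mult_bounded_tendsto_0:
  fixes g :: "nat \<Rightarrow> 'a \<Rightarrow> real" and h :: "'a \<Rightarrow> real"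
  assumes B: "B \<in> sets M" "emeasure M B < \<infinity>"
    and g: "\<And>j. set_borel_measurable M B (g j)" "\<And>j. set_integrable M B (\<lambda>x. (g j x)\<^sup>2)"
    and h: "h \<in> borel_measurable M" "\<And>x. \<bar>h x\<bar> \<le> 1"
    and lim: "(\<lambda>j. LINT x:B|M. (g j x)\<^sup>2) \<longlonglongrightarrow> 0"
  shows "(\<lambda>j. LINT x:B|M. g j x * h x) \<longlonglongrightarrow> 0"
proof (rule LIMSEQ_I)
  fix r :: real
  assume r: "r > 0"
  define d where "d = r / (measure M B + 1)"
  have m: "measure M B \<ge> 0"
    by simp
  then have d: "d > 0"
    unfolding d_def using r by (intro divide_pos_pos) linarith+
  have "d * (measure M B + 1) = r"
    unfolding d_def using m by (simp add: add_nonneg_eq_0_iff)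
  then have dm: "d / 2 * measure M B < r / 2"
    using d by (simp add: algebra_simps)
  obtain N where N: "\<And>j. j \<ge> N \<Longrightarrow> \<bar>LINT x:B|M. (g j x)\<^sup>2\<bar> < r * d"
    using LIMSEQ_D[OF lim, of "r * d"] r d by auto
  have "\<bar>LINT x:B|M. g j x * h x\<bar> < r" if "j \<ge> N" for j
  proof -
    have "(LINT x:B|M. (g j x)\<^sup>2) / (2 * d) < r / 2"
      using N[OF that] d by (simp add: field_simps)
    then show ?thesis
      using abs_set_integral_mult_le[OF B g(1,2) h d, of j] dm by linarith
  qed
  then show "\<exists>N. \<forall>j\<ge>N. norm ((LINT x:B|M. g j x * h x) - 0) < r"
    by auto
qed

lemma L2_tendsto_0_imp_set_integral_mult_tendsto_0:
  fixes g :: "nat \<Rightarrow> real^'n::finite \<Rightarrow> real"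
  assumes U: "bounded U" "open U" and g: "\<And>j. L2_on U (g j)"
    and h: "continuous_on UNIV h" "\<And>x. \<bar>h x\<bar> \<le> 1"
    and lim: "(\<lambda>j. LINT x:U|lebesgue. (g j x)\<^sup>2) \<longlonglongrightarrow> 0"
  shows "(\<lambda>j. LINT x:U|lebesgue. g j x * h x) \<longlonglongrightarrow> 0"
proof -
  have "U \<in> sets borel"
    using U(2) by simp
  then have "U \<in> sets lebesgue" "emeasure lebesgue U < \<infinity>"
    using emeasure_bounded_finite[OF U(1)] by simp_all
  moreover have "h \<in> borel_measurable lebesgue"
    by (rule measurable_completion) (simp add: borel_measurable_continuous_onI[OF h(1)])
  ultimately show ?thesis
    using g h(2) lim by (intro set_integral_mult_bounded_tendsto_0) (auto simp: L2_on_def)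
qed

section \<open>Orthogonality of the right-hand side to plane waves\<close>

definition helmholtz_of_derivs :: "real \<Rightarrow> ('n::finite list \<Rightarrow> real^'n \<Rightarrow> real) \<Rightarrow> real^'n \<Rightarrow> real"
  where "helmholtz_of_derivs k G x = (\<Sum>i\<in>UNIV. G [i,i] x) + k\<^sup>2 * G [] x"

lemma helmholtz_of_derivs_iter_partial:
  "helmholtz_of_derivs k (\<lambda>is. iter_partial is \<psi>) x = laplacian \<psi> x + k\<^sup>2 * \<psi> x"
  by (simp add: helmholtz_of_derivs_def laplacian_def)

lemma set_integral_sum_add_mult:
  fixes f :: "'i \<Rightarrow> 'a \<Rightarrow> real"
  assumes f: "\<And>i. i \<in> I \<Longrightarrow> set_integrable M A (f i)" and g: "set_integrable M A g"
  shows "(LINT x:A|M. (\<Sum>i\<in>I. f i x) + c * g x) = (\<Sum>i\<in>I. LINT x:A|M. f i x) + c * (LINT x:A|M. g x)"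
proof -
  have sum: "set_integrable M A (\<lambda>x. \<Sum>i\<in>I. f i x)"
    using f by (rule set_integral_sum(1))
  have "(LINT x:A|M. \<Sum>i\<in>I. f i x) = (\<Sum>i\<in>I. LINT x:A|M. f i x)"
    using f by (rule set_integral_sum(2))
  then show ?thesis
    by (simp add: set_integral_add(2)[OF sum set_integrable_mult_right[OF g]])
qed

lemma set_integral_helmholtz_of_derivs_mult:
  assumes U: "bounded U" "open U" and G: "\<And>is. length is \<le> 2 \<Longrightarrow> L2_on U (G is)"
    and h: "continuous_on (closure U) h"
  shows "set_integrable lebesgue U (\<lambda>x. helmholtz_of_derivs k G x * h x)"
    and "(LINT x:U|lebesgue. helmholtz_of_derivs k G x * h x)
      = (\<Sum>i\<in>UNIV. LINT x:U|lebesgue. G [i,i] x * h x) + k\<^sup>2 * (LINT x:U|lebesgue. G [] x * h x)"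
proof -
  have eq: "helmholtz_of_derivs k G x * h x = (\<Sum>i\<in>UNIV. G [i,i] x * h x) + k\<^sup>2 * (G [] x * h x)" for x
    by (simp add: helmholtz_of_derivs_def sum_distrib_right distrib_right)
  have int: "set_integrable lebesgue U (\<lambda>x. G is x * h x)" if "length is \<le> 2" for "is"
    by (rule set_integrable_L2_on_mult[OF U G[OF that] h])
  show "set_integrable lebesgue U (\<lambda>x. helmholtz_of_derivs k G x * h x)"
    unfolding eq using int
    by (intro set_integral_add(1) set_integral_sum(1) set_integrable_mult_right) auto
  show "(LINT x:U|lebesgue. helmholtz_of_derivs k G x * h x)
      = (\<Sum>i\<in>UNIV. LINT x:U|lebesgue. G [i,i] x * h x) + k\<^sup>2 * (LINT x:U|lebesgue. G [] x * h x)"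
    unfolding eq using int by (intro set_integral_sum_add_mult) auto
qed

lemma set_integral_helmholtz_of_derivs_diff:
  assumes U: "bounded U" "open U" and F: "\<And>is. length is \<le> 2 \<Longrightarrow> L2_on U (F is)"
    and G: "\<And>is. length is \<le> 2 \<Longrightarrow> L2_on U (G is)" and h: "continuous_on (closure U) h"
  shows "(LINT x:U|lebesgue. helmholtz_of_derivs k F x * h x) - (LINT x:U|lebesgue. helmholtz_of_derivs k G x * h x)
    = (\<Sum>i\<in>UNIV. LINT x:U|lebesgue. (F [i,i] x - G [i,i] x) * h x)
      + k\<^sup>2 * (LINT x:U|lebesgue. (F [] x - G [] x) * h x)"
proof -
  have "helmholtz_of_derivs k (\<lambda>is x. F is x - G is x) x * h x
      = helmholtz_of_derivs k F x * h x - helmholtz_of_derivs k G x * h x" for x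
    by (simp add: helmholtz_of_derivs_def sum_subtractf algebra_simps)
  then show ?thesis
    using set_integral_helmholtz_of_derivs_mult[OF U _ h, where G="\<lambda>is x. F is x - G is x" and k=k]
      set_integral_helmholtz_of_derivs_mult(1)[OF U F h, where k=k]
      set_integral_helmholtz_of_derivs_mult(1)[OF U G h, where k=k] L2_on_diff[OF F G]
    by (simp add: set_integral_diff(2))
qed

lemma set_integral_helmholtz_weak:
  assumes U: "bounded U" "open U" and G: "H2_derivs U u G"
    and helm: "helmholtz_weak U k u \<phi>" and \<theta>: "test_fun U \<theta>"
  shows "(LINT x:U|lebesgue. \<phi> x * \<theta> x) = (LINT x:U|lebesgue. helmholtz_of_derivs k G x * \<theta> x)"
proof -
  have u: "G [] = u" and L2: "\<And>is. length is \<le> 2 \<Longrightarrow> L2_on U (G is)"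
    and wd: "\<And>is. length is \<le> 2 \<Longrightarrow> weak_deriv U is u (G is)"
    using G by (auto simp: H2_derivs_def)
  have sm: "smooth_fun \<theta>"
    using \<theta> by (simp add: test_fun_def)
  have c\<theta>: "continuous_on (closure U) (iter_partial is \<theta>)" for "is"
    using continuous_on_iter_partial[OF sm] by (rule continuous_on_subset) simp
  have int: "set_integrable lebesgue U (\<lambda>x. u x * iter_partial is \<theta> x)" for "is"
    using set_integrable_L2_on_mult[OF U L2[of "[]"] c\<theta>] u by simp
  have "(LINT x:U|lebesgue. \<phi> x * \<theta> x) = (LINT x:U|lebesgue. u x * (laplacian \<theta> x + k\<^sup>2 * \<theta> x))"
    using helm \<theta> by (simp add: helmholtz_weak_def)
  also have "\<dots> = (LINT x:U|lebesgue. (\<Sum>i\<in>UNIV. u x * iter_partial [i,i] \<theta> x) + k\<^sup>2 * (u x * \<theta> x))"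
    by (simp add: laplacian_def sum_distrib_left algebra_simps)
  also have "\<dots> = (\<Sum>i\<in>UNIV. LINT x:U|lebesgue. u x * iter_partial [i,i] \<theta> x)
      + k\<^sup>2 * (LINT x:U|lebesgue. u x * \<theta> x)"
    using int int[of "[]"] by (intro set_integral_sum_add_mult) auto
  also have "\<dots> = (\<Sum>i\<in>UNIV. LINT x:U|lebesgue. G [i,i] x * \<theta> x) + k\<^sup>2 * (LINT x:U|lebesgue. G [] x * \<theta> x)"
    using wd[of "[_,_]"] \<theta> u by (simp add: weak_deriv_def)
  also have "\<dots> = (LINT x:U|lebesgue. helmholtz_of_derivs k G x * \<theta> x)"
    using set_integral_helmholtz_of_derivs_mult(2)[OF U L2 c\<theta>[of "[]"]] by simp
  finally show ?thesis .
qed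

lemma set_integral_lebesgue_eq_integral_lborel:
  fixes F :: "'a::euclidean_space \<Rightarrow> real"
  assumes "F \<in> borel_measurable borel" "\<And>x. x \<notin> U \<Longrightarrow> F x = 0"
  shows "(LINT x:U|lebesgue. F x) = integral\<^sup>L lborel F"
proof -
  have "(\<lambda>x. indicator U x *\<^sub>R F x) = F"
    using assms(2) by (auto simp: fun_eq_iff split: split_indicator)
  then have "(LINT x:U|lebesgue. F x) = integral\<^sup>L lebesgue F"
    by (simp add: set_lebesgue_integral_def)
  also have "\<dots> = integral\<^sup>L lborel F"
    by (rule integral_completion) (use assms in simp)
  finally show ?thesis .
qed

lemma set_integral_helmholtz_test_fun_cos_wave:
  assumes "test_fun U \<psi>"
  shows "(LINT x:U|lebesgue. helmholtz_of_derivs k (\<lambda>is. iter_partial is \<psi>) x * cos_wave k l c x) = 0"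
proof -
  obtain K where K: "compact K" "K \<subseteq> U" and \<psi>K: "\<And>x. x \<notin> K \<Longrightarrow> \<psi> x = 0"
    and sm: "smooth_fun \<psi>"
    using test_funE[OF assms] by blast
  have "(LINT x:U|lebesgue. (laplacian \<psi> x + k\<^sup>2 * \<psi> x) * cos_wave k l c x)
      = integral\<^sup>L lborel (\<lambda>x. (laplacian \<psi> x + k\<^sup>2 * \<psi> x) * cos_wave k l c x)"
  proof (rule set_integral_lebesgue_eq_integral_lborel)
    show "(\<lambda>x. (laplacian \<psi> x + k\<^sup>2 * \<psi> x) * cos_wave k l c x) \<in> borel_measurable borel"
      using continuous_on_iter_partial[OF sm] continuous_on_iter_partial[OF sm, of "[]"]
        continuous_on_cos_wave
      unfolding laplacian_def by (intro borel_measurable_continuous_onI continuous_intros) auto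
    show "(laplacian \<psi> x + k\<^sup>2 * \<psi> x) * cos_wave k l c x = 0" if "x \<notin> U" for x
    proof -
      have "x \<notin> K"
        using that K(2) by blast
      then show ?thesis
        using iter_partial_eq_0_outside[OF sm compact_imp_closed[OF K(1)] \<psi>K] \<psi>K
        by (simp add: laplacian_def)
    qed
  qed
  then show ?thesis
    by (simp add: helmholtz_of_derivs_iter_partial integral_helmholtz_cos_wave_eq_0[OF assms])
qed

text \<open>Pass to the limit along the test functions converging to \<open>u\<close> in \<open>H\<^sup>2\<close>, each of which is
  orthogonal to the plane wave.\<close>

lemma set_integral_helmholtz_of_derivs_cos_wave:
  assumes U: "bounded U" "open U" and G: "H2_derivs U u G"
    and \<psi>: "\<And>j. test_fun U (\<psi> j)"
    and conv: "\<And>is. length is \<le> 2 \<Longrightarrow>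
      (\<lambda>j. LINT x:U|lebesgue. (iter_partial is (\<psi> j) x - G is x)\<^sup>2) \<longlonglongrightarrow> 0"
  shows "(LINT x:U|lebesgue. helmholtz_of_derivs k G x * cos_wave k l c x) = 0"
proof -
  define v where "v = cos_wave k l c"
  have cv: "continuous_on (closure U) v"
    unfolding v_def using continuous_on_cos_wave by (rule continuous_on_subset) simp
  have L2G: "\<And>is. length is \<le> 2 \<Longrightarrow> L2_on U (G is)"
    using G by (simp add: H2_derivs_def)
  have L2\<psi>: "L2_on U (iter_partial is (\<psi> j))" for j "is"
    using \<psi>[of j] continuous_on_iter_partial
    by (intro continuous_on_imp_L2_on[OF U]) (auto simp: test_fun_def intro: continuous_on_subset)
  have lim: "(\<lambda>j. LINT x:U|lebesgue. (iter_partial is (\<psi> j) x - G is x) * v x) \<longlonglongrightarrow> 0"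
    if "length is \<le> 2" for "is"
    unfolding v_def using L2_on_diff[OF L2\<psi> L2G[OF that]] conv[OF that]
    by (intro L2_tendsto_0_imp_set_integral_mult_tendsto_0[OF U] continuous_on_cos_wave abs_cos_wave_le_1)
  have "(\<lambda>j. (\<Sum>i\<in>UNIV. LINT x:U|lebesgue. (iter_partial [i,i] (\<psi> j) x - G [i,i] x) * v x)
      + k\<^sup>2 * (LINT x:U|lebesgue. (iter_partial [] (\<psi> j) x - G [] x) * v x)) \<longlonglongrightarrow> 0 + k\<^sup>2 * 0"
    by (intro tendsto_add tendsto_mult tendsto_const tendsto_null_sum lim) simp_all
  moreover have "(LINT x:U|lebesgue. helmholtz_of_derivs k (\<lambda>is. iter_partial is (\<psi> j)) x * v x)
      - (LINT x:U|lebesgue. helmholtz_of_derivs k G x * v x)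
      = (\<Sum>i\<in>UNIV. LINT x:U|lebesgue. (iter_partial [i,i] (\<psi> j) x - G [i,i] x) * v x)
        + k\<^sup>2 * (LINT x:U|lebesgue. (iter_partial [] (\<psi> j) x - G [] x) * v x)" for j
    by (rule set_integral_helmholtz_of_derivs_diff[OF U L2\<psi> L2G cv])
  moreover have "(LINT x:U|lebesgue. helmholtz_of_derivs k (\<lambda>is. iter_partial is (\<psi> j)) x * v x) = 0" for j
    unfolding v_def by (rule set_integral_helmholtz_test_fun_cos_wave[OF \<psi>])
  ultimately have "(\<lambda>j. - (LINT x:U|lebesgue. helmholtz_of_derivs k G x * v x)) \<longlonglongrightarrow> 0"
    by simp
  then show ?thesis
    by (simp add: v_def LIMSEQ_const_iff)
qed

text \<open>The radius \<open>R (1 - 1/(m + 2)) < R\<close> keeps the support of the cutoff inside the ball, and the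
  factor \<open>m + 1\<close> makes the cutoffs tend to \<open>1\<close> pointwise on it.\<close>

definition ball_cutoff :: "real^'n::finite \<Rightarrow> real \<Rightarrow> nat \<Rightarrow> real^'n \<Rightarrow> real" where
  "ball_cutoff c R m x =
    exp_recip_deriv 0 (real (Suc m) * ((R * (1 - 1 / (real m + 2)))\<^sup>2 - (dist x c)\<^sup>2))"

lemma ball_cutoff_in_smooth_gen: "ball_cutoff c R m \<in> smooth_gen"
proof -
  have "(\<lambda>x. exp_recip_deriv 0 (real (Suc m) * ((R * (1 - 1 / (real m + 2)))\<^sup>2
      - (\<Sum>i\<in>UNIV. (x $ i - c $ i) * (x $ i - c $ i))))) \<in> smooth_gen"
    by (intro smooth_gen.comp[of exp_recip_deriv, OF DERIV_exp_recip_deriv] smooth_gen.mult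
        smooth_gen_diff smooth_gen.const smooth_gen_sum smooth_gen.component) auto
  moreover have "(\<Sum>i\<in>UNIV. (x $ i - c $ i) * (x $ i - c $ i)) = (dist x c)\<^sup>2" for x
    by (simp add: dist_norm norm_vec_def L2_set_def real_sqrt_pow2 sum_nonneg power2_eq_square)
  ultimately show ?thesis
    unfolding ball_cutoff_def[abs_def] by simp
qed

lemma ball_cutoff_bounds: "0 \<le> ball_cutoff c R m x" "ball_cutoff c R m x \<le> 1"
  by (simp_all add: ball_cutoff_def exp_recip_deriv_0_bounds)

lemma ball_cutoff_eq_0:
  assumes "R > 0" "x \<notin> cball c (R * (1 - 1 / (real m + 2)))"
  shows "ball_cutoff c R m x = 0"
proof -
  have "0 \<le> R * (1 - 1 / (real m + 2))"
    using assms(1) by (simp add: field_simps)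
  then have "(R * (1 - 1 / (real m + 2)))\<^sup>2 \<le> (dist x c)\<^sup>2"
    using assms(2) by (intro power_mono) (auto simp: dist_commute)
  then have "real (Suc m) * ((R * (1 - 1 / (real m + 2)))\<^sup>2 - (dist x c)\<^sup>2) \<le> 0"
    by (intro mult_nonneg_nonpos) auto
  then show ?thesis
    by (simp add: ball_cutoff_def exp_recip_deriv_def)
qed

lemma tendsto_ball_cutoff:
  assumes "x \<in> ball c R"
  shows "(\<lambda>m. ball_cutoff c R m x) \<longlonglongrightarrow> 1"
proof -
  have d: "(dist x c)\<^sup>2 < R\<^sup>2"
    using assms by (intro power_strict_mono) (auto simp: dist_commute)
  have "(\<lambda>m. 1 / (real m + 2)) \<longlonglongrightarrow> 0"
    by real_asymp
  then have "(\<lambda>m. (R * (1 - 1 / (real m + 2)))\<^sup>2 - (dist x c)\<^sup>2) \<longlonglongrightarrow> (R * (1 - 0))\<^sup>2 - (dist x c)\<^sup>2"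
    by (intro tendsto_intros)
  then have "(\<lambda>m. (R * (1 - 1 / (real m + 2)))\<^sup>2 - (dist x c)\<^sup>2) \<longlonglongrightarrow> R\<^sup>2 - (dist x c)\<^sup>2"
    by simp
  then have "filterlim (\<lambda>m. ((R * (1 - 1 / (real m + 2)))\<^sup>2 - (dist x c)\<^sup>2) * real (Suc m))
      at_top sequentially"
    by (rule filterlim_tendsto_pos_mult_at_top) (use d in simp, real_asymp)
  from filterlim_compose[OF tendsto_exp_recip_deriv_0_at_top this] show ?thesis
    by (simp add: ball_cutoff_def mult.commute)
qed

lemma test_fun_ball_cutoff_mult:
  assumes "R > 0" "f \<in> smooth_gen"
  shows "test_fun (ball c R) (\<lambda>x. ball_cutoff c R m x * f x)"
proof -
  define r where "r = R * (1 - 1 / (real m + 2))"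
  have "{x. ball_cutoff c R m x * f x \<noteq> 0} \<subseteq> cball c r"
  proof
    fix x
    assume "x \<in> {x. ball_cutoff c R m x * f x \<noteq> 0}"
    then show "x \<in> cball c r"
      using ball_cutoff_eq_0[OF assms(1), of x c m] unfolding r_def by auto
  qed
  then have sub: "closure {x. ball_cutoff c R m x * f x \<noteq> 0} \<subseteq> cball c r"
    by (rule closure_minimal) simp
  have "r < R"
    using assms(1) by (simp add: r_def field_simps)
  then have "cball c r \<subseteq> ball c R"
    by (simp add: cball_subset_ball_iff)
  have "smooth_fun (\<lambda>x. ball_cutoff c R m x * f x)"
    by (intro smooth_gen_imp_smooth_fun smooth_gen.mult ball_cutoff_in_smooth_gen assms(2))
  moreover have "compact (closure {x. ball_cutoff c R m x * f x \<noteq> 0})"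
    using bounded_subset[OF bounded_cball sub] by (simp add: compact_eq_bounded_closed)
  moreover have "closure {x. ball_cutoff c R m x * f x \<noteq> 0} \<subseteq> ball c R"
    using sub \<open>cball c r \<subseteq> ball c R\<close> by (rule order_trans)
  ultimately show ?thesis
    unfolding test_fun_def by blast
qed

lemma tendsto_set_integral_ball_cutoff:
  assumes "set_integrable lebesgue (ball c R) F"
  shows "(\<lambda>m. LINT x:ball c R|lebesgue. ball_cutoff c R m x * F x) \<longlonglongrightarrow> (LINT x:ball c R|lebesgue. F x)"
  unfolding set_lebesgue_integral_def
proof (rule integral_dominated_convergence[where w="\<lambda>x. norm (indicator (ball c R) x *\<^sub>R F x)"])
  have "(\<lambda>x. indicator (ball c R) x *\<^sub>R F x) \<in> borel_measurable lebesgue"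
    using assms unfolding set_integrable_def by (rule borel_measurable_integrable)
  then show "(\<lambda>x. indicator (ball c R) x *\<^sub>R F x) \<in> borel_measurable lebesgue" .
  moreover have "ball_cutoff c R m \<in> borel_measurable lebesgue" for m
    by (rule measurable_completion)
      (simp add: borel_measurable_continuous_onI[OF smooth_gen_continuous[OF ball_cutoff_in_smooth_gen]])
  ultimately have "(\<lambda>x. ball_cutoff c R m x * (indicator (ball c R) x *\<^sub>R F x)) \<in> borel_measurable lebesgue"
    for m
    by (intro borel_measurable_times)
  then show "(\<lambda>x. indicator (ball c R) x *\<^sub>R (ball_cutoff c R m x * F x)) \<in> borel_measurable lebesgue"
    for m
    by (simp add: mult.left_commute)
  show "integrable lebesgue (\<lambda>x. norm (indicator (ball c R) x *\<^sub>R F x))"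
    using assms unfolding set_integrable_def by (rule integrable_norm)
  show "AE x in lebesgue. norm (indicator (ball c R) x *\<^sub>R (ball_cutoff c R m x * F x))
      \<le> norm (indicator (ball c R) x *\<^sub>R F x)" for m
  proof (intro AE_I2)
    fix x
    have "\<bar>ball_cutoff c R m x * F x\<bar> \<le> \<bar>F x\<bar>"
      unfolding abs_mult using ball_cutoff_bounds[of c R m x] by (intro mult_left_le_one_le) auto
    then show "norm (indicator (ball c R) x *\<^sub>R (ball_cutoff c R m x * F x))
        \<le> norm (indicator (ball c R) x *\<^sub>R F x)"
      by (simp split: split_indicator)
  qed
  show "AE x in lebesgue. (\<lambda>m. indicator (ball c R) x *\<^sub>R (ball_cutoff c R m x * F x))
      \<longlonglongrightarrow> indicator (ball c R) x *\<^sub>R F x"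
    using tendsto_ball_cutoff
    by (intro AE_I2) (auto intro!: tendsto_eq_intros split: split_indicator)
qed

lemma set_integral_cos_wave_eq_0:
  assumes R: "R > 0" and H0: "H2_0 (ball c R) u" and helm: "helmholtz_weak (ball c R) k u \<phi>"
    and \<phi>: "continuous_on (cball c R) \<phi>"
  shows "(LINT x:ball c R|lebesgue. \<phi> x * cos_wave k l c x) = 0"
proof -
  have U: "bounded (ball c R)" "open (ball c R)"
    by simp_all
  have cv: "continuous_on (closure (ball c R)) (cos_wave k l c)"
    using continuous_on_cos_wave by (rule continuous_on_subset) simp
  obtain G \<psi> where G: "H2_derivs (ball c R) u G" and \<psi>: "\<And>j. test_fun (ball c R) (\<psi> j)"
    and conv: "\<And>is. length is \<le> 2 \<Longrightarrow>
      (\<lambda>j. LINT x:ball c R|lebesgue. (iter_partial is (\<psi> j) x - G is x)\<^sup>2) \<longlonglongrightarrow> 0"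
    using H0 unfolding H2_0_def by blast
  have L2G: "\<And>is. length is \<le> 2 \<Longrightarrow> L2_on (ball c R) (G is)"
    using G by (simp add: H2_derivs_def)
  have "set_integrable lebesgue (ball c R) (\<lambda>x. \<phi> x * cos_wave k l c x)"
    using R \<phi> continuous_on_subset[OF continuous_on_cos_wave subset_UNIV]
    by (intro set_integrable_continuous_on_closure[OF U] continuous_intros) auto
  then have "(\<lambda>m. LINT x:ball c R|lebesgue. ball_cutoff c R m x * (\<phi> x * cos_wave k l c x))
      \<longlonglongrightarrow> (LINT x:ball c R|lebesgue. \<phi> x * cos_wave k l c x)"
    by (rule tendsto_set_integral_ball_cutoff)
  moreover have "(\<lambda>m. LINT x:ball c R|lebesgue. ball_cutoff c R m x * (helmholtz_of_derivs k G x * cos_wave k l c x))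
      \<longlonglongrightarrow> (LINT x:ball c R|lebesgue. helmholtz_of_derivs k G x * cos_wave k l c x)"
    by (rule tendsto_set_integral_ball_cutoff[OF set_integral_helmholtz_of_derivs_mult(1)[OF U L2G cv]])
  moreover have "(LINT x:ball c R|lebesgue. ball_cutoff c R m x * (\<phi> x * cos_wave k l c x))
      = (LINT x:ball c R|lebesgue. ball_cutoff c R m x * (helmholtz_of_derivs k G x * cos_wave k l c x))"
    for m
    using set_integral_helmholtz_weak[OF U G helm test_fun_ball_cutoff_mult[OF R cos_wave_in_smooth_gen]]
    by (simp add: mult_ac)
  ultimately have "(LINT x:ball c R|lebesgue. \<phi> x * cos_wave k l c x)
      = (LINT x:ball c R|lebesgue. helmholtz_of_derivs k G x * cos_wave k l c x)"
    using LIMSEQ_unique by fastforce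
  also have "\<dots> = 0"
    by (rule set_integral_helmholtz_of_derivs_cos_wave[OF U G \<psi> conv])
  finally show ?thesis .
qed

section \<open>The boundary estimate\<close>

lemma holder_quotient_le:
  assumes "bdd_above (holder_quotients \<alpha> S f)" "x \<in> S" "y \<in> S"
  shows "\<bar>f x - f y\<bar> \<le> Sup (holder_quotients \<alpha> S f) * dist x y powr \<alpha>"
proof (cases "x = y")
  case False
  then have "\<bar>f x - f y\<bar> / dist x y powr \<alpha> \<in> holder_quotients \<alpha> S f"
    unfolding holder_quotients_def using assms(2,3) by blast
  then have "\<bar>f x - f y\<bar> / dist x y powr \<alpha> \<le> Sup (holder_quotients \<alpha> S f)"
    by (rule cSup_upper[OF _ assms(1)])
  then show ?thesis
    using False by (simp add: divide_le_eq)
qed simp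

lemma holder_seminorm_nonneg:
  assumes "bdd_above (holder_quotients \<alpha> S f)" "x \<in> S" "y \<in> S" "x \<noteq> y"
  shows "0 \<le> Sup (holder_quotients \<alpha> S f)"
proof -
  have "\<bar>f x - f y\<bar> / dist x y powr \<alpha> \<in> holder_quotients \<alpha> S f"
    unfolding holder_quotients_def using assms(2-4) by blast
  then have "\<bar>f x - f y\<bar> / dist x y powr \<alpha> \<le> Sup (holder_quotients \<alpha> S f)"
    by (rule cSup_upper[OF _ assms(1)])
  then show ?thesis
    by (rule order_trans[rotated]) simp
qed

lemma abs_le_of_orthogonal_weight:
  fixes \<phi> v :: "'a \<Rightarrow> real"
  assumes v: "set_integrable M A v" "\<And>x. x \<in> A \<Longrightarrow> 0 \<le> v x" "(LINT x:A|M. v x) > 0"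
    and \<phi>v: "set_integrable M A (\<lambda>x. \<phi> x * v x)" "(LINT x:A|M. \<phi> x * v x) = 0"
    and osc: "\<And>x. x \<in> A \<Longrightarrow> \<bar>\<phi> x0 - \<phi> x\<bar> \<le> b"
  shows "\<bar>\<phi> x0\<bar> \<le> b"
proof -
  have int: "set_integrable M A (\<lambda>x. \<phi> x0 * v x - \<phi> x * v x)"
    using v(1) \<phi>v(1) by (intro set_integral_diff(1) set_integrable_mult_right)
  have "\<bar>\<phi> x0\<bar> * (LINT x:A|M. v x) = \<bar>LINT x:A|M. \<phi> x0 * v x - \<phi> x * v x\<bar>"
    using v(1,3) \<phi>v by (simp add: set_integral_diff(2) abs_mult)
  also have "\<dots> \<le> (LINT x:A|M. \<bar>\<phi> x0 * v x - \<phi> x * v x\<bar>)"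
    using set_integral_norm_bound[OF int] by simp
  also have "\<dots> \<le> (LINT x:A|M. b * v x)"
  proof (rule set_integral_mono[OF set_integrable_abs[OF int]])
    show "set_integrable M A (\<lambda>x. b * v x)"
      using v(1) by simp
    show "\<bar>\<phi> x0 * v x - \<phi> x * v x\<bar> \<le> b * v x" if "x \<in> A" for x
      using mult_right_mono[OF osc[OF that] v(2)[OF that]]
      by (simp add: left_diff_distrib[symmetric] abs_mult v(2)[OF that])
  qed
  also have "\<dots> = b * (LINT x:A|M. v x)"
    by simp
  finally show ?thesis
    using v(3) by simp
qed

lemma cos_1_pos: "cos (1::real) > 0"
  using pi_gt3 by (intro cos_gt_zero) auto

lemma cos_wave_ge_cos_1:
  assumes "k \<ge> 0" "k * R \<le> 1" "x \<in> ball c R"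
  shows "cos 1 \<le> cos_wave k l c x"
proof -
  have "\<bar>x $ l - c $ l\<bar> \<le> norm (x - c)"
    using component_le_norm_cart[of "x - c" l] by simp
  also have "\<dots> < R"
    using assms(3) by (simp add: dist_norm norm_minus_commute)
  finally have "k * \<bar>x $ l - c $ l\<bar> \<le> k * R"
    using assms(1) by (intro mult_left_mono) auto
  then have "\<bar>k * (x $ l - c $ l)\<bar> \<le> 1"
    using assms(1,2) by (simp add: abs_mult)
  then have "cos 1 \<le> cos \<bar>k * (x $ l - c $ l)\<bar>"
    using pi_gt3 by (subst cos_mono_le_eq) auto
  then show ?thesis
    by (simp add: cos_wave_def)
qed

lemma set_integral_cos_wave_pos:
  assumes "R > 0" "k \<ge> 0" "k * R \<le> 1"
  shows "(LINT x:ball c R|lebesgue. cos_wave k l c x) > 0"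
proof -
  have U: "bounded (ball c R)" "open (ball c R)"
    by simp_all
  note cos_1_pos
  moreover have "measure lebesgue (ball c R) > 0"
    using content_ball_pos[OF assms(1), of c] by simp
  moreover have "(LINT x:ball c R|lebesgue. cos 1) = measure lebesgue (ball c R) * cos 1"
    using emeasure_bounded_finite[of "ball c R"] by (simp add: set_integral_const)
  moreover have "(LINT x:ball c R|lebesgue. cos 1) \<le> (LINT x:ball c R|lebesgue. cos_wave k l c x)"
    using cos_wave_ge_cos_1[OF assms(2,3)] continuous_on_subset[OF continuous_on_cos_wave]
    by (intro set_integral_mono set_integrable_continuous_on_closure[OF U]) auto
  ultimately show ?thesis
    by (metis mult_pos_pos order_less_le_trans)
qed

lemma abs_le_holder_seminorm_on_sphere:
  fixes c :: "real^'n::finite"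
  assumes R: "R > 0" and kR: "k * R \<le> 1" and k: "k \<ge> 0" and \<alpha>: "0 \<le> \<alpha>" "\<alpha> \<le> 1"
    and H0: "H2_0 (ball c R) u" and helm: "helmholtz_weak (ball c R) k u \<phi>"
    and \<phi>: "continuous_on (cball c R) \<phi>" and bq: "bdd_above (holder_quotients \<alpha> (cball c R) \<phi>)"
    and x0: "x0 \<in> sphere c R"
  shows "\<bar>\<phi> x0\<bar> \<le> 2 * R powr \<alpha> * Sup (holder_quotients \<alpha> (cball c R) \<phi>)"
proof -
  fix l :: 'n \<comment> \<open>any coordinate direction will do\<close>
  define Q where "Q = Sup (holder_quotients \<alpha> (cball c R) \<phi>)"
  have Q: "Q \<ge> 0"
    unfolding Q_def using R x0 by (intro holder_seminorm_nonneg[OF bq, of c x0]) auto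
  have osc: "\<bar>\<phi> x0 - \<phi> x\<bar> \<le> Q * (2 * R) powr \<alpha>" if "x \<in> ball c R" for x
  proof -
    have "dist x0 x \<le> 2 * R"
      using dist_triangle[of x0 x c] x0 that by (simp add: dist_commute)
    then have "Q * dist x0 x powr \<alpha> \<le> Q * (2 * R) powr \<alpha>"
      using Q \<alpha> by (intro mult_left_mono powr_mono2) auto
    then show ?thesis
      using holder_quotient_le[OF bq, of x0 x] x0 that unfolding Q_def by simp
  qed
  have int: "set_integrable lebesgue (ball c R) (cos_wave k l c)"
    "set_integrable lebesgue (ball c R) (\<lambda>x. \<phi> x * cos_wave k l c x)"
    using R \<phi> continuous_on_subset[OF continuous_on_cos_wave]
    by (auto intro!: set_integrable_continuous_on_closure continuous_intros)
  have pos: "0 \<le> cos_wave k l c x" if "x \<in> ball c R" for x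
    using cos_wave_ge_cos_1[OF k kR that, where l=l] cos_1_pos by linarith
  have "\<bar>\<phi> x0\<bar> \<le> Q * (2 * R) powr \<alpha>"
    by (rule abs_le_of_orthogonal_weight[OF int(1) pos set_integral_cos_wave_pos[OF R k kR] int(2)
          set_integral_cos_wave_eq_0[OF R H0 helm \<phi>] osc])
  also have "\<dots> = Q * 2 powr \<alpha> * R powr \<alpha>"
    using R by (simp add: powr_mult)
  also have "\<dots> \<le> Q * 2 * R powr \<alpha>"
    using Q \<alpha> powr_mono[of \<alpha> 1 2] by (intro mult_right_mono mult_left_mono) auto
  finally show ?thesis
    by (simp add: Q_def mult_ac)
qed

lemma one_le_powr_of_large_frequency:
  fixes R k \<alpha> :: real
  assumes "0 < R" "1 < k * R" "0 \<le> \<alpha>" "\<alpha> \<le> 1"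
  shows "1 \<le> (k + 2) * R powr \<alpha>"
proof -
  have "0 < k * R"
    using assms(2) by linarith
  then have k: "k > 0"
    using assms(1) by (simp add: zero_less_mult_iff)
  show ?thesis
  proof (cases "R \<ge> 1")
    case True
    then have "1 \<le> R powr \<alpha>"
      using assms(3) by (rule ge_one_powr_ge_zero)
    then show ?thesis
      using k mult_mono[of 1 "k + 2" 1 "R powr \<alpha>"] by simp
  next
    case False
    then have "R \<le> R powr \<alpha>"
      using assms(1,4) powr_mono'[of \<alpha> 1 R] by simp
    then have "(k + 2) * R \<le> (k + 2) * R powr \<alpha>"
      using k by (intro mult_left_mono) auto
    moreover have "1 \<le> (k + 2) * R"
      using assms(1,2) by (simp add: algebra_simps)
    ultimately show ?thesis
      by linarith
  qed
qed

lemma abs_le_holder_norm_on_sphere: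
  fixes c :: "real^'n::finite"
  assumes R: "R > 0" and k: "k \<ge> 0" and \<alpha>: "0 \<le> \<alpha>" "\<alpha> \<le> 1"
    and H0: "H2_0 (ball c R) u" and helm: "helmholtz_weak (ball c R) k u \<phi>"
    and hs: "holder_space \<alpha> (cball c R) \<phi>" and x0: "x0 \<in> sphere c R"
  shows "\<bar>\<phi> x0\<bar> \<le> (k + 2) * R powr \<alpha> * holder_norm \<alpha> (cball c R) \<phi>"
proof -
  define S where "S = (SUP x\<in>cball c R. \<bar>\<phi> x\<bar>)"
  define Q where "Q = Sup (holder_quotients \<alpha> (cball c R) \<phi>)"
  have \<phi>: "continuous_on (cball c R) \<phi>" and bq: "bdd_above (holder_quotients \<alpha> (cball c R) \<phi>)"
    and "bounded (\<phi> ` cball c R)"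
    using hs by (simp_all add: holder_space_def)
  then have "bdd_above ((\<lambda>x. \<bar>\<phi> x\<bar>) ` cball c R)"
    by (auto simp: bounded_iff intro: bdd_aboveI2)
  then have S: "\<bar>\<phi> x\<bar> \<le> S" if "x \<in> cball c R" for x
    unfolding S_def using that by (rule cSUP_upper2) simp
  have Q: "Q \<ge> 0"
    unfolding Q_def using R x0 by (intro holder_seminorm_nonneg[OF bq, of c x0]) auto
  have "\<bar>\<phi> x0\<bar> \<le> (k + 2) * R powr \<alpha> * (S + Q)"
  proof (cases "k * R \<le> 1")
    case True
    then have "\<bar>\<phi> x0\<bar> \<le> 2 * R powr \<alpha> * Q"
      unfolding Q_def by (rule abs_le_holder_seminorm_on_sphere[OF R _ k \<alpha> H0 helm \<phi> bq x0])
    also have "\<dots> \<le> (k + 2) * R powr \<alpha> * (S + Q)"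
      using k Q S[of x0] x0 by (intro mult_mono mult_right_mono) auto
    finally show ?thesis .
  next
    case False
    then have "1 * (S + Q) \<le> (k + 2) * R powr \<alpha> * (S + Q)"
      using one_le_powr_of_large_frequency[OF R _ \<alpha>] Q S[of x0] x0
      by (intro mult_right_mono) auto
    then show ?thesis
      using S[of x0] x0 Q by simp
  qed
  then show ?thesis
    by (simp add: holder_norm_def S_def Q_def)
qed

theorem proposition2p6:
  fixes Rm k :: real
  assumes "CARD('n::finite) \<ge> 2" and "Rm > 0" and "k \<ge> 0"
  shows "\<exists>C::real. \<forall>(c::real^'n) R \<alpha> u \<phi>.
           0 < R \<longrightarrow> R \<le> Rm \<longrightarrow> 0 \<le> \<alpha> \<longrightarrow> \<alpha> \<le> 1 \<longrightarrow>
           H2 (ball c R) u \<longrightarrow> H2_0 (ball c R) u \<longrightarrow>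
           holder_space \<alpha> (cball c R) \<phi> \<longrightarrow>
           helmholtz_weak (ball c R) k u \<phi> \<longrightarrow>
           (SUP x\<in>sphere c R. \<bar>\<phi> x\<bar>) \<le> C * R powr \<alpha> * holder_norm \<alpha> (cball c R) \<phi>"
proof (intro exI[of _ "k + 2"] allI impI)
  fix c :: "real^'n" and R \<alpha> :: real and u \<phi> :: "real^'n \<Rightarrow> real"
  assume "0 < R" "R \<le> Rm" "0 \<le> \<alpha>" "\<alpha> \<le> 1" "H2 (ball c R) u" "H2_0 (ball c R) u"
    "holder_space \<alpha> (cball c R) \<phi>" "helmholtz_weak (ball c R) k u \<phi>"
  then show "(SUP x\<in>sphere c R. \<bar>\<phi> x\<bar>) \<le> (k + 2) * R powr \<alpha> * holder_norm \<alpha> (cball c R) \<phi>"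
    using abs_le_holder_norm_on_sphere[of R k \<alpha> c u \<phi>] \<open>k \<ge> 0\<close>
    by (intro cSUP_least) auto
qed

end
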